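(* Let $k\geq 2$, let $0\leq r<1$ be real, and let $H$ be a $k$-hypertree with $|H|$ vertices and $e(H)$ edges. Then for every $k$-hypergraph $X$ with $n$ vertices and $n^{k-r}$ edges, $|\mathrm{Inj}(H,X)|=\Omega(n^{|H|-e(H)r})$ as $n\to\infty$, where the implicit constant depends only on $H$, $k$ and $r$.
   Context: A $k$-hypertree is a $k$-hypergraph built from a single edge by repeatedly adding an edge that meets the current hypergraph in exactly $k-1$ vertices all contained in one existing edge (so each new edge adds exactly one new vertex). $\mathrm{Inj}(H,X)$ is the set of injective maps $f$ from the vertices of $H$ to the vertices of $X$ such that the image of every edge of $H$ is an edge of $X$. *)

theory Defs
  imports Complex_Main "HOL-Library.FuncSet"
begin

definition k_hypergraph :: "nat \<Rightarrow> 'a set \<Rightarrow> 'a set set \<Rightarrow> bool" where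
  "k_hypergraph k V E \<longleftrightarrow> finite V \<and> (\<forall>e\<in>E. e \<subseteq> V \<and> card e = k)"

inductive hypertree :: "nat \<Rightarrow> 'a set \<Rightarrow> 'a set set \<Rightarrow> bool" for k where
  base: "card e = k \<Longrightarrow> hypertree k e {e}"
| step: "hypertree k V E \<Longrightarrow> f \<in> E \<Longrightarrow> S \<subseteq> f \<Longrightarrow> card S = k - 1 \<Longrightarrow> v \<notin> V
          \<Longrightarrow> hypertree k (insert v V) (insert (insert v S) E)"

definition Inj :: "'a set \<Rightarrow> 'a set set \<Rightarrow> 'b set \<Rightarrow> 'b set set \<Rightarrow> ('a \<Rightarrow> 'b) set" where
  "Inj VH EH VX EdX = {f \<in> VH \<rightarrow>\<^sub>E VX. inj_on f VH \<and> (\<forall>e\<in>EH. f ` e \<in> EdX)}"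

end

theory Submission imports Defs begin

text \<open>
  Prune X: as long as some (k-1)-subset of an edge lies in fewer than d edges, delete those
  edges. Each (k-1)-set is responsible for fewer than d deletions, so at most d n^(k-1) edges
  are lost, and the remaining family F has minimum codegree at least d. In F a hypertree can be
  embedded greedily: the first edge in |F| ways, and every further edge, which adds one vertex v
  glued to a (k-1)-subset of an already embedded edge, in at least d - |H| ways, since the image
  of that subset has codegree at least d and at most |H| of the candidates for v are already
  used. Taking d about n^(1-r)/2 keeps |F| \<ge> n^(k-r)/2 and gives
  n^(k-r) (n^(1-r))^(e(H)-1) = n^(|H| - e(H) r) up to a constant, as |H| + 1 = k + e(H).
\<close>

definition shadow :: "nat \<Rightarrow> 'b set set \<Rightarrow> 'b set set" where
  "shadow k F = {S. \<exists>g\<in>F. S \<subseteq> g \<and> card S = k - 1}"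

definition codegree :: "'b set set \<Rightarrow> 'b set \<Rightarrow> nat" where
  "codegree F S = card {h\<in>F. S \<subseteq> h}"

definition min_codegree_ge :: "nat \<Rightarrow> nat \<Rightarrow> 'b set set \<Rightarrow> bool" where
  "min_codegree_ge k d F \<longleftrightarrow> (\<forall>g\<in>F. \<forall>S. S \<subseteq> g \<and> card S = k - 1 \<longrightarrow> d \<le> codegree F S)"

lemma hypertree_wellformed:
  assumes "hypertree k V E" "k \<ge> 1"
  shows "k_hypergraph k V E \<and> finite E \<and> E \<noteq> {} \<and> card V + 1 = k + card E"
  using assms
proof (induction rule: hypertree.induct)
  case (base e)
  then have "finite e" using card_ge_0_finite[of e] by simp
  then show ?case using base by (simp add: k_hypergraph_def)
next
  case (step V E f S v)
  then have IH: "finite V" "\<forall>e\<in>E. e \<subseteq> V \<and> card e = k" "finite E"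
      "card V + 1 = k + card E"
    by (simp_all add: k_hypergraph_def)
  have "S \<subseteq> V" using IH(2) step.hyps(2,3) by blast
  then have "finite S" "v \<notin> S" using IH(1) step.hyps(5) finite_subset by auto
  then have "card (insert v S) = k" using step.hyps(4) step.prems by simp
  moreover have "insert v S \<notin> E" using IH(2) step.hyps(5) by blast
  ultimately show ?case
    using IH \<open>S \<subseteq> V\<close> step.hyps(5) by (auto simp: k_hypergraph_def)
qed

lemma card_shadow_le:
  assumes "finite VX" "\<forall>g\<in>F. g \<subseteq> VX"
  shows "card (shadow k F) \<le> card VX ^ (k - 1)"
proof -
  have "shadow k F \<subseteq> {B. B \<subseteq> VX \<and> card B = k - 1}"
    using assms unfolding shadow_def by auto
  then have "card (shadow k F) \<le> card VX choose (k - 1)"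
    using card_mono[of "{B. B \<subseteq> VX \<and> card B = k - 1}"] n_subsets[OF assms(1)] assms(1)
    by simp
  also have "\<dots> \<le> card VX ^ (k - 1)"
    by (cases "k - 1 \<le> card VX") (simp_all add: binomial_le_pow binomial_eq_0)
  finally show ?thesis .
qed

lemma exists_min_codegree_subfamily:
  assumes "finite (\<Union>F)"
  shows "\<exists>F'\<subseteq>F. min_codegree_ge k d F' \<and> card F \<le> card F' + d * card (shadow k F)"
  using assms
proof (induction "card (shadow k F)" arbitrary: F rule: less_induct)
  case less
  show ?case
  proof (cases "min_codegree_ge k d F")
    case False
    then obtain g S where S: "g \<in> F" "S \<subseteq> g" "card S = k - 1" "codegree F S < d"
      unfolding min_codegree_ge_def by (meson not_le)
    define F1 where "F1 = {h\<in>F. \<not> S \<subseteq> h}"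
    have "shadow k F \<subseteq> Pow (\<Union>F)" unfolding shadow_def by auto
    then have "finite (shadow k F)" using less.prems finite_subset by blast
    moreover have "shadow k F1 \<subset> shadow k F"
      using S unfolding shadow_def F1_def by auto
    ultimately have smaller: "card (shadow k F1) < card (shadow k F)"
      by (simp add: psubset_card_mono)
    moreover have "finite (\<Union>F1)"
      using less.prems unfolding F1_def by (rule finite_subset[rotated]) auto
    ultimately obtain F' where F': "F' \<subseteq> F1" "min_codegree_ge k d F'"
        "card F1 \<le> card F' + d * card (shadow k F1)"
      using less.hyps by blast
    have "F = F1 \<union> {h\<in>F. S \<subseteq> h}" unfolding F1_def by auto
    then have "card F \<le> card F1 + codegree F S"
      unfolding codegree_def by (metis card_Un_le)
    also have "\<dots> \<le> card F' + d * (card (shadow k F1) + 1)"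
      using F'(3) S(4) by simp
    also have "\<dots> \<le> card F' + d * card (shadow k F)"
      using mult_le_mono2[OF Suc_leI[OF smaller], of d] by simp
    finally show ?thesis using F' unfolding F1_def by auto
  qed auto
qed

lemma finite_Inj: "finite V \<Longrightarrow> finite VX \<Longrightarrow> finite (Inj V E VX F)"
  unfolding Inj_def by (rule finite_subset[OF _ finite_PiE]) auto

lemma Inj_mono: "F' \<subseteq> F \<Longrightarrow> Inj V E VX F' \<subseteq> Inj V E VX F"
  unfolding Inj_def by auto

lemma card_le_card_Inj_single_edge:
  fixes e :: "'a set" and F :: "'b set set"
  assumes "card e = k" "k \<ge> 1" "finite VX" "\<forall>g\<in>F. g \<subseteq> VX \<and> card g = k"
  shows "card F \<le> card (Inj e {e} VX F)"
proof -
  have "finite e" using assms card_ge_0_finite[of e] by simp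
  define \<phi> :: "'b set \<Rightarrow> 'a \<Rightarrow> 'b" where "\<phi> g = restrict (SOME h. bij_betw h e g) e" for g
  have bij: "bij_betw (\<phi> g) e g" if "g \<in> F" for g
  proof -
    have "finite g" using that assms finite_subset by blast
    then have "\<exists>h. bij_betw h e g" using \<open>finite e\<close> assms that by (metis finite_same_card_bij)
    then show ?thesis unfolding \<phi>_def by (metis bij_betw_cong restrict_apply' someI_ex)
  qed
  then have "\<phi> ` F \<subseteq> Inj e {e} VX F"
    using assms(4) \<phi>_def by (fastforce simp: Inj_def bij_betw_def)
  moreover have "inj_on \<phi> F" using bij by (metis bij_betw_imp_surj_on inj_onI)
  ultimately show ?thesis
    using finite_Inj[OF \<open>finite e\<close> assms(3)] by (metis card_image card_mono)
qed

lemma card_extension_vertices_ge: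
  assumes \<phi>: "\<phi> \<in> Inj V E VX F"
    and H: "finite V" "\<forall>e\<in>E. e \<subseteq> V" "f \<in> E" "S \<subseteq> f" "card S = k - 1" "k \<ge> 1"
    and X: "finite VX" "\<forall>g\<in>F. g \<subseteq> VX \<and> card g = k" "min_codegree_ge k d F"
  shows "d - card V \<le> card {w\<in>VX. w \<notin> \<phi> ` V \<and> insert w (\<phi> ` S) \<in> F}"
proof -
  let ?T = "\<phi> ` S"
  define A where "A = {w\<in>VX - ?T. insert w ?T \<in> F}"
  have "S \<subseteq> V" using H(2-4) by blast
  have inj: "inj_on \<phi> V" and "\<phi> ` f \<in> F" using \<phi> H(3) unfolding Inj_def by auto
  have cT: "card ?T = k - 1"
    using card_image[OF inj_on_subset[OF inj \<open>S \<subseteq> V\<close>]] H(5) by simp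
  have "finite ?T" using H(1) \<open>S \<subseteq> V\<close> by (meson finite_imageI finite_subset)
  have "d \<le> codegree F ?T"
    using X(3) \<open>\<phi> ` f \<in> F\<close> cT image_mono[OF H(4)] unfolding min_codegree_ge_def by blast
  also have "codegree F ?T \<le> card A"
  proof -
    have "{h\<in>F. ?T \<subseteq> h} \<subseteq> (\<lambda>w. insert w ?T) ` A"
    proof
      fix h assume h: "h \<in> {h\<in>F. ?T \<subseteq> h}"
      then have "h \<subseteq> VX" "card h = k" using X(2) by auto
      then have "finite h" using X(1) finite_subset by blast
      then have "card (h - ?T) = 1"
        using h \<open>card h = k\<close> cT \<open>finite ?T\<close> H(6) by (simp add: card_Diff_subset)
      then obtain w where "h - ?T = {w}" using card_1_singletonE by blast
      then have "h = insert w ?T" "w \<in> VX - ?T" using h \<open>h \<subseteq> VX\<close> by auto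
      then show "h \<in> (\<lambda>w. insert w ?T) ` A" unfolding A_def using h by auto
    qed
    moreover have "finite A" unfolding A_def using X(1) by simp
    ultimately show ?thesis
      unfolding codegree_def by (meson card_image_le card_mono finite_imageI le_trans)
  qed
  also have "card A \<le> card (A - \<phi> ` V) + card V"
    using diff_card_le_card_Diff[of "\<phi> ` V" A] card_image_le[OF H(1), of \<phi>] H(1) by simp
  also have "card (A - \<phi> ` V) \<le> card {w\<in>VX. w \<notin> \<phi> ` V \<and> insert w ?T \<in> F}"
    using X(1) unfolding A_def by (intro card_mono) auto
  finally show ?thesis by simp
qed

lemma fun_upd_in_Inj_insert_edge:
  assumes "\<phi> \<in> Inj V E VX F" "\<forall>e\<in>E. e \<subseteq> V" "S \<subseteq> V" "v \<notin> V"
    and "w \<in> VX" "w \<notin> \<phi> ` V" "insert w (\<phi> ` S) \<in> F"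
  shows "\<phi>(v := w) \<in> Inj (insert v V) (insert (insert v S) E) VX F"
proof -
  have \<phi>: "\<phi> \<in> V \<rightarrow>\<^sub>E VX" "inj_on \<phi> V" "\<forall>e\<in>E. \<phi> ` e \<in> F"
    using assms(1) unfolding Inj_def by auto
  have "\<phi>(v := w) \<in> insert v V \<rightarrow>\<^sub>E VX"
    using \<phi>(1) assms(4,5) by (auto simp: PiE_iff extensional_def)
  moreover have "inj_on (\<phi>(v := w)) (insert v V)"
    using \<phi>(2) assms(4,6) by (auto simp: inj_on_def)
  moreover have "\<phi>(v := w) ` e \<in> F" if "e \<in> insert (insert v S) E" for e
  proof -
    have "\<phi>(v := w) ` e = \<phi> ` e" if "e \<in> E"
      using that assms(2,4) by (auto simp: fun_upd_image)
    moreover have "\<phi>(v := w) ` insert v S = insert w (\<phi> ` S)"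
      using assms(3,4) by (auto simp: fun_upd_image)
    ultimately show ?thesis using \<open>e \<in> insert (insert v S) E\<close> \<phi>(3) assms(7) by auto
  qed
  ultimately show ?thesis unfolding Inj_def by blast
qed

lemma inj_on_fun_upd_extensional:
  assumes "A \<subseteq> extensional V" "v \<notin> V"
  shows "inj_on (\<lambda>(\<phi>, w). \<phi>(v := w)) (Sigma A W)"
proof (rule inj_onI, clarify)
  fix \<phi>1 w1 \<phi>2 w2
  assume "\<phi>1 \<in> A" "\<phi>2 \<in> A" and eq: "\<phi>1(v := w1) = \<phi>2(v := w2)"
  then have "\<phi>1 v = \<phi>2 v" using assms by (metis extensional_arb subsetD)
  then show "\<phi>1 = \<phi>2 \<and> w1 = w2" using eq by (metis fun_upd_same fun_upd_triv fun_upd_upd)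
qed

lemma card_Inj_insert_edge_ge:
  fixes V :: "'a set" and F :: "'b set set"
  assumes H: "finite V" "\<forall>e\<in>E. e \<subseteq> V" "f \<in> E" "S \<subseteq> f" "card S = k - 1" "v \<notin> V" "k \<ge> 1"
    and X: "finite VX" "\<forall>g\<in>F. g \<subseteq> VX \<and> card g = k" "min_codegree_ge k d F"
  shows "card (Inj V E VX F) * (d - card V)
           \<le> card (Inj (insert v V) (insert (insert v S) E) VX F)"
proof -
  define I where "I = Inj V E VX F"
  define W where "W \<phi> = {w\<in>VX. w \<notin> \<phi> ` V \<and> insert w (\<phi> ` S) \<in> F}" for \<phi>
  define extend :: "('a \<Rightarrow> 'b) \<times> 'b \<Rightarrow> 'a \<Rightarrow> 'b" where "extend = (\<lambda>(\<phi>, w). \<phi>(v := w))"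
  have "S \<subseteq> V" using H(2-4) by blast
  have "finite I" unfolding I_def using finite_Inj H(1) X(1) by blast
  have "d - card V \<le> card (W \<phi>)" if "\<phi> \<in> I" for \<phi>
    using card_extension_vertices_ge[OF that[unfolded I_def] H(1-5,7) X] unfolding W_def .
  then have "card I * (d - card V) \<le> (\<Sum>\<phi>\<in>I. card (W \<phi>))"
    using sum_bounded_below[of I "d - card V" "\<lambda>\<phi>. card (W \<phi>)"] by simp
  also have "\<dots> = card (Sigma I W)"
    using \<open>finite I\<close> X(1) by (simp add: W_def card_SigmaI)
  also have "\<dots> = card (extend ` Sigma I W)"
  proof -
    have "I \<subseteq> extensional V" unfolding I_def Inj_def by (auto simp: PiE_def)
    then show ?thesis
      using card_image[OF inj_on_fun_upd_extensional[OF _ H(6)]] unfolding extend_def by metis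
  qed
  also have "\<dots> \<le> card (Inj (insert v V) (insert (insert v S) E) VX F)"
  proof (rule card_mono)
    show "finite (Inj (insert v V) (insert (insert v S) E) VX F)"
      using finite_Inj H(1) X(1) by blast
    have "\<phi>(v := w) \<in> Inj (insert v V) (insert (insert v S) E) VX F"
      if "\<phi> \<in> I" "w \<in> W \<phi>" for \<phi> w
      using fun_upd_in_Inj_insert_edge[of \<phi> V E VX F S v w] that H(2,6) \<open>S \<subseteq> V\<close>
      unfolding I_def W_def by blast
    then show "extend ` Sigma I W \<subseteq> Inj (insert v V) (insert (insert v S) E) VX F"
      unfolding extend_def by fast
  qed
  finally show ?thesis unfolding I_def .
qed

lemma card_Inj_hypertree_min_codegree_ge:
  assumes "hypertree k V E" "k \<ge> 1"
    and "finite VX" "\<forall>g\<in>F. g \<subseteq> VX \<and> card g = k" "min_codegree_ge k d F"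
  shows "card F * (d - card V) ^ (card E - 1) \<le> card (Inj V E VX F)"
  using assms
proof (induction rule: hypertree.induct)
  case (base e)
  then show ?case using card_le_card_Inj_single_edge[of e k VX F] by simp
next
  case (step V E f S v)
  have H: "finite V" "\<forall>e\<in>E. e \<subseteq> V" "finite E" "E \<noteq> {}"
    using hypertree_wellformed[OF step.hyps(1) step.prems(1)] by (auto simp: k_hypergraph_def)
  then have "insert v S \<notin> E" using step.hyps(5) by auto
  then have card_step: "card (insert (insert v S) E) - 1 = Suc (card E - 1)"
    "card (insert v V) = Suc (card V)"
    using H step.hyps(5) by (simp_all add: card_gt_0_iff)
  have "card F * (d - card (insert v V)) ^ (card (insert (insert v S) E) - 1)
          \<le> card F * (d - card V) ^ (card E - 1) * (d - card V)"
  proof -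
    have "(d - Suc (card V)) ^ Suc (card E - 1) \<le> (d - card V) ^ Suc (card E - 1)"
      by (rule power_mono) auto
    then show ?thesis
      unfolding card_step power_Suc2 mult.assoc by (rule mult_le_mono2)
  qed
  also have "\<dots> \<le> card (Inj V E VX F) * (d - card V)"
    using step.IH[OF step.prems] by (rule mult_le_mono1)
  also have "\<dots> \<le> card (Inj (insert v V) (insert (insert v S) E) VX F)"
    using card_Inj_insert_edge_ge[OF H(1,2) step.hyps(2-5) step.prems] .
  finally show ?case .
qed

lemma card_Inj_hypertree_ge_threshold:
  assumes "hypertree k V E" "k \<ge> 1" "k_hypergraph k VX EdX"
  shows "(card EdX - d * card VX ^ (k - 1)) * (d - card V) ^ (card E - 1)
           \<le> card (Inj V E VX EdX)"
proof -
  have X: "finite VX" "\<forall>g\<in>EdX. g \<subseteq> VX \<and> card g = k"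
    using assms(3) unfolding k_hypergraph_def by auto
  then have "finite (\<Union>EdX)" by (meson Union_least finite_subset)
  then obtain F where F: "F \<subseteq> EdX" "min_codegree_ge k d F"
      "card EdX \<le> card F + d * card (shadow k EdX)"
    using exists_min_codegree_subfamily by blast
  have "card (shadow k EdX) \<le> card VX ^ (k - 1)"
    using card_shadow_le X by blast
  then have "d * card (shadow k EdX) \<le> d * card VX ^ (k - 1)"
    by (rule mult_le_mono2)
  then have "card EdX - d * card VX ^ (k - 1) \<le> card F"
    using F(3) by linarith
  then have "(card EdX - d * card VX ^ (k - 1)) * (d - card V) ^ (card E - 1)
               \<le> card F * (d - card V) ^ (card E - 1)"
    by (rule mult_le_mono1)
  also have "\<dots> \<le> card (Inj V E VX F)"
    using card_Inj_hypertree_min_codegree_ge[OF assms(1,2) X(1)] F(1,2) X(2) by blast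
  also have "\<dots> \<le> card (Inj V E VX EdX)"
  proof -
    have "finite V" using hypertree_wellformed[OF assms(1,2)] by (simp add: k_hypergraph_def)
    then show ?thesis using card_mono[OF finite_Inj[OF _ X(1)] Inj_mono[OF F(1)]] by blast
  qed
  finally show ?thesis .
qed

lemma nat_floor_half_bounds:
  fixes x :: real
  assumes "4 * (real m + 1) \<le> x"
  shows "real (nat \<lfloor>x / 2\<rfloor>) \<le> x / 2" and "x / 4 \<le> real (nat \<lfloor>x / 2\<rfloor> - m)"
proof -
  define d where "d = nat \<lfloor>x / 2\<rfloor>"
  have "real d = of_int \<lfloor>x / 2\<rfloor>" using assms by (simp add: d_def)
  then have "x / 2 - 1 < real d" "real d \<le> x / 2" by linarith+
  moreover have "real m \<le> real d" using calculation assms by simp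
  ultimately show "real d \<le> x / 2" "x / 4 \<le> real (d - m)"
    using assms by (simp_all add: of_nat_diff)
qed

lemma powr_hypertree_exponent:
  fixes n r :: real
  assumes "n > 0" "m + 1 = k + e" "e \<ge> 1"
  shows "n powr (real k - r) * (n powr (1 - r)) ^ (e - 1) = n powr (real m - real e * r)"
proof -
  have "(n powr (1 - r)) ^ (e - 1) = n powr ((1 - r) * real (e - 1))"
    using assms(1) by (simp add: powr_powr powr_realpow[symmetric])
  moreover have "real k - r + (1 - r) * real (e - 1) = real m - real e * r"
    using assms(2,3) by (simp add: of_nat_diff algebra_simps flip: of_nat_add)
  ultimately show ?thesis by (metis powr_add)
qed

lemma card_Inj_ge_powr:
  assumes "hypertree k V E" "k \<ge> 1" "k_hypergraph k VX EdX" "card VX = n"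
    and "real n powr (real k - r) \<le> real (card EdX)"
    and "4 * (real (card V) + 1) \<le> real n powr (1 - r)"
  shows "real n powr (real k - r) / 2 * (real n powr (1 - r) / 4) ^ (card E - 1)
           \<le> real (card (Inj V E VX EdX))"
proof -
  define x where "x = real n powr (1 - r)"
  define d where "d = nat \<lfloor>x / 2\<rfloor>"
  have "real n > 0" using assms(6) unfolding x_def by (cases "n = 0") auto
  have d: "real d \<le> x / 2" "x / 4 \<le> real (d - card V)"
    using nat_floor_half_bounds assms(6) unfolding d_def x_def by blast+
  have "x * real n ^ (k - 1) = real n powr (real k - r)"
    using \<open>real n > 0\<close> assms(2)
    by (simp add: x_def powr_realpow[symmetric] of_nat_diff flip: powr_add)
  then have "real (d * n ^ (k - 1)) \<le> real n powr (real k - r) / 2"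
    using mult_right_mono[OF d(1), of "real n ^ (k - 1)"] by simp
  moreover have "real (card EdX) - real (d * n ^ (k - 1)) \<le> real (card EdX - d * n ^ (k - 1))"
    by (simp add: of_nat_diff_if flip: of_nat_mult of_nat_power)
  ultimately have "real n powr (real k - r) / 2 \<le> real (card EdX - d * n ^ (k - 1))"
    using assms(5) by linarith
  moreover have "(x / 4) ^ (card E - 1) \<le> real ((d - card V) ^ (card E - 1))"
    using d(2) \<open>real n > 0\<close> by (simp add: x_def power_mono)
  ultimately have "real n powr (real k - r) / 2 * (x / 4) ^ (card E - 1)
      \<le> real (card EdX - d * n ^ (k - 1)) * real ((d - card V) ^ (card E - 1))"
    by (intro mult_mono) (auto simp: x_def)
  also have "\<dots> \<le> real (card (Inj V E VX EdX))"
    using card_Inj_hypertree_ge_threshold[OF assms(1-3), of d] assms(4)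
    by (metis of_nat_le_iff of_nat_mult)
  finally show ?thesis unfolding x_def .
qed

theorem lemma8:
  fixes k :: nat and r :: real and V :: "'a set" and E :: "'a set set"
  assumes "k \<ge> 2" and "0 \<le> r" and "r < 1" and "hypertree k V E"
  shows "\<exists>C>0. \<exists>N::nat. \<forall>n\<ge>N. \<forall>(VX::nat set) EdX.
           k_hypergraph k VX EdX \<and> card VX = n \<and> real (card EdX) \<ge> real n powr (real k - r)
           \<longrightarrow> real (card (Inj V E VX EdX)) \<ge> C * real n powr (real (card V) - real (card E) * r)"
proof -
  have "k \<ge> 1" using assms(1) by simp
  have H: "card V + 1 = k + card E" "card E \<ge> 1"
    using hypertree_wellformed[OF assms(4) \<open>k \<ge> 1\<close>] by (auto simp: Suc_le_eq card_gt_0_iff)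
  define B :: real where "B = 4 * (real (card V) + 1)"
  define C :: real where "C = 1 / (2 * 4 ^ (card E - 1))"
  define N :: nat where "N = nat \<lceil>B powr (1 / (1 - r))\<rceil> + 1"
  have "C * real n powr (real (card V) - real (card E) * r) \<le> real (card (Inj V E VX EdX))"
    if "n \<ge> N" "k_hypergraph k VX EdX" "card VX = n"
      "real n powr (real k - r) \<le> real (card EdX)" for n and VX :: "nat set" and EdX
  proof -
    have "real n > 0" using \<open>n \<ge> N\<close> unfolding N_def by simp
    have "B powr (1 / (1 - r)) \<le> real n" using \<open>n \<ge> N\<close> unfolding N_def by linarith
    have "B = (B powr (1 / (1 - r))) powr (1 - r)"
      using assms(3) by (simp add: B_def powr_powr)
    also have "\<dots> \<le> real n powr (1 - r)"
      using \<open>B powr (1 / (1 - r)) \<le> real n\<close> assms(3) by (intro powr_mono2) simp_all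
    finally have "real n powr (real k - r) / 2 * (real n powr (1 - r) / 4) ^ (card E - 1)
                    \<le> real (card (Inj V E VX EdX))"
      using card_Inj_ge_powr[OF assms(4) \<open>k \<ge> 1\<close> that(2-4)] unfolding B_def by blast
    then show ?thesis
      using powr_hypertree_exponent[OF \<open>real n > 0\<close> H, of r]
      by (simp add: C_def power_divide field_simps)
  qed
  moreover have "C > 0" unfolding C_def by simp
  ultimately show ?thesis by blast
qed

end
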